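(* Let $p,q\ge1$, $N>\max(p,q)$, let $\mu$ be a $q\times p$ matrix of measures, and assume $\mathscr M_N$ admits a Gauss--Borel factorization $\mathscr M_N=\mathscr L_N^{-1}\mathscr U_N^{-1}$ (with $\mathscr L_n,\mathscr U_n$, $n\le N$, the leading principal submatrices). With $\mathscr T^{[N-q,N]}:=\mathscr L_{N-q}\Lambda^{[N-q,N]}_{[q]}\mathscr L_N^{-1}$ and $\mathscr T^{[N,N-p]}:=\mathscr U_N^{-1}(\Lambda^{[N-p,N]}_{[p]})^\top\mathscr U_{N-p}$, the following recursion relations hold: \[\mathscr T^{[N-q,N]}B^{[N]}(x)=x\,B^{[N-q]}(x),\qquad A^{[N]}(x)\,\mathscr T^{[N,N-p]}=x\,A^{[N-p]}(x).\]
   Context: All matrices are indexed from $0$. $\mu$ is a $q\times p$ matrix of real measures with finite moments. For $r,n\ge1$, $X^{[n]}_{[r]}(x)$ is the $n\times r$ matrix whose row $k$ is $x^{\lfloor k/r\rfloor}e_{k\bmod r}^\top$ ($e_0,\dots,e_{r-1}$ standard basis of $\mathbb R^r$). Moment matrices: $\mathscr M^{[n,m]}=\int X^{[n]}_{[q]}\,\mathrm d\mu\,(X^{[m]}_{[p]})^\top$, $\mathscr M_n=\mathscr M^{[n,n]}$. Gauss--Borel factorization: $\mathscr M_N=\mathscr L_N^{-1}\mathscr U_N^{-1}$, $\mathscr L_N$ nonsingular lower triangular, $\mathscr U_N$ nonsingular upper triangular. For $n\le N$: $B^{[n]}(x):=\mathscr L_nX^{[n]}_{[q]}(x)$ ($n\times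 q$) and $A^{[n]}(x):=(X^{[n]}_{[p]}(x))^\top\mathscr U_n$ ($p\times n$). $\Lambda^{[n,n+r]}_{[r]}$ is the $n\times(n+r)$ matrix with entries $\delta_{j,i+r}$. *)

theory Defs
  imports "HOL-Analysis.Analysis" "Jordan_Normal_Form.Matrix"
begin

(* All matrices are indexed from 0. *)

(* A real (signed) measure is represented as the difference \<mu>p - \<mu>n of two finite
   Borel measures on the real line. A q x p matrix of real measures is a pair of
   functions  \<mu>p \<mu>n :: nat \<Rightarrow> nat \<Rightarrow> real measure  (entries (i,j), i<q, j<p). *)
definition real_measure_finite_moments :: "real measure \<Rightarrow> real measure \<Rightarrow> bool" where
  "real_measure_finite_moments m1 m2 \<longleftrightarrow>
     sets m1 = sets borel \<and> sets m2 = sets borel \<and>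
     finite_measure m1 \<and> finite_measure m2 \<and>
     (\<forall>k::nat. integrable m1 (\<lambda>x. x ^ k) \<and> integrable m2 (\<lambda>x. x ^ k))"

definition moment :: "real measure \<Rightarrow> real measure \<Rightarrow> nat \<Rightarrow> real" where
  "moment m1 m2 k = (\<integral>x. x ^ k \<partial>m1) - (\<integral>x. x ^ k \<partial>m2)"

definition Xmat :: "nat \<Rightarrow> nat \<Rightarrow> real \<Rightarrow> real mat" where
  "Xmat n r x = mat n r (\<lambda>(k, j). if j = k mod r then x ^ (k div r) else 0)"

(* Moment matrix  M^{[n,m]} = \<integral> X^{[n]}_{[q]} d\<mu> (X^{[m]}_{[p]})^T, entrywise *)
definition moment_matrix ::
  "nat \<Rightarrow> nat \<Rightarrow> (nat \<Rightarrow> nat \<Rightarrow> real measure) \<Rightarrow> (nat \<Rightarrow> nat \<Rightarrow> real measure)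
     \<Rightarrow> nat \<Rightarrow> nat \<Rightarrow> real mat" where
  "moment_matrix q p \<mu>p \<mu>n n m =
     mat n m (\<lambda>(a, b). moment (\<mu>p (a mod q) (b mod p)) (\<mu>n (a mod q) (b mod p))
                              (a div q + b div p))"

definition lower_triangular :: "'a::zero mat \<Rightarrow> bool" where
  "lower_triangular A \<longleftrightarrow> (\<forall>i < dim_row A. \<forall>j < dim_col A. i < j \<longrightarrow> A $$ (i, j) = 0)"

definition mat_inv :: "real mat \<Rightarrow> real mat" where
  "mat_inv A = (SOME B. B \<in> carrier_mat (dim_row A) (dim_row A) \<and> inverts_mat A B \<and> inverts_mat B A)"

definition lead_sub :: "nat \<Rightarrow> 'a mat \<Rightarrow> 'a mat" where
  "lead_sub n A = mat n n (\<lambda>(i, j). A $$ (i, j))"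

definition Lambda_mat :: "nat \<Rightarrow> nat \<Rightarrow> real mat" where
  "Lambda_mat n r = mat n (n + r) (\<lambda>(i, j). if j = i + r then 1 else 0)"

end

theory Submission
  imports Defs
begin

(* Row k + r of X^{[n+r]}_{[r]}(x) is x times row k, so the shift \<Lambda>^{[n,n+r]}_{[r]} acts on X as
   multiplication by x. Both recursion relations follow from this after cancelling
   L_N^{-1} L_N, resp. U_N U_N^{-1}. *)

lemma dim_Xmat [simp]: "dim_row (Xmat n r x) = n" "dim_col (Xmat n r x) = r"
  unfolding Xmat_def by simp_all

lemma dim_Lambda_mat [simp]: "dim_row (Lambda_mat n r) = n" "dim_col (Lambda_mat n r) = n + r"
  unfolding Lambda_mat_def by simp_all

lemma Xmat_carrier [simp]: "Xmat n r x \<in> carrier_mat n r"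
  by (rule carrier_matI) simp_all

lemma Lambda_mat_carrier [simp]: "Lambda_mat n r \<in> carrier_mat n (n + r)"
  by (rule carrier_matI) simp_all

lemma lead_sub_carrier [simp]: "lead_sub n A \<in> carrier_mat n n"
  unfolding lead_sub_def by simp

lemma lead_sub_id: "A \<in> carrier_mat n n \<Longrightarrow> lead_sub n A = A"
  unfolding lead_sub_def by (auto intro!: eq_matI)

lemma transpose_smult_mat: "transpose_mat (k \<cdot>\<^sub>m A) = k \<cdot>\<^sub>m transpose_mat A"
  by (rule eq_matI) auto

lemma invertible_mat_mat_inv:
  assumes A: "A \<in> carrier_mat n n" and "invertible_mat A"
  shows "mat_inv A \<in> carrier_mat n n" "mat_inv A * A = 1\<^sub>m n" "A * mat_inv A = 1\<^sub>m n"
proof -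
  obtain B where AB: "A * B = 1\<^sub>m n" and BA: "B * A = 1\<^sub>m (dim_row B)"
    using assms unfolding invertible_mat_def inverts_mat_def by auto
  have "dim_col B = n"
    using arg_cong[OF AB, of dim_col] by simp
  moreover have "dim_row B = n"
    using arg_cong[OF BA, of dim_col] A by simp
  ultimately have "\<exists>B. B \<in> carrier_mat (dim_row A) (dim_row A) \<and> inverts_mat A B \<and> inverts_mat B A"
    using A AB BA unfolding inverts_mat_def by auto
  then have "mat_inv A \<in> carrier_mat (dim_row A) (dim_row A) \<and> inverts_mat A (mat_inv A)
      \<and> inverts_mat (mat_inv A) A"
    unfolding mat_inv_def by (rule someI_ex)
  then show "mat_inv A \<in> carrier_mat n n" "mat_inv A * A = 1\<^sub>m n" "A * mat_inv A = 1\<^sub>m n"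
    using A unfolding inverts_mat_def by auto
qed

lemma Lambda_mat_mult_Xmat:
  assumes "r \<ge> 1"
  shows "Lambda_mat n r * Xmat (n + r) r x = x \<cdot>\<^sub>m Xmat n r x"
proof (rule eq_matI)
  fix i j assume "i < dim_row (x \<cdot>\<^sub>m Xmat n r x)" and "j < dim_col (x \<cdot>\<^sub>m Xmat n r x)"
  then have i: "i < n" and j: "j < r" by simp_all
  have "(Lambda_mat n r * Xmat (n + r) r x) $$ (i, j)
      = (\<Sum>k<n + r. (if k = i + r then 1 else 0) * (if j = k mod r then x ^ (k div r) else 0))"
    using i j unfolding Lambda_mat_def Xmat_def
    by (simp add: scalar_prod_def lessThan_atLeast0)
  also have "\<dots> = (if j = (i + r) mod r then x ^ ((i + r) div r) else 0)"
    using i by (simp add: if_distrib[where f="\<lambda>a. a * _"] sum.delta' cong: if_cong)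
  also have "\<dots> = x * (if j = i mod r then x ^ (i div r) else 0)"
    using assms by (simp add: div_add_self2)
  finally show "(Lambda_mat n r * Xmat (n + r) r x) $$ (i, j) = (x \<cdot>\<^sub>m Xmat n r x) $$ (i, j)"
    using i j by (simp add: Xmat_def)
qed auto

lemma transpose_Xmat_mult_transpose_Lambda_mat:
  assumes "r \<ge> 1"
  shows "transpose_mat (Xmat (n + r) r x) * transpose_mat (Lambda_mat n r)
    = x \<cdot>\<^sub>m transpose_mat (Xmat n r x)"
proof -
  have "transpose_mat (Lambda_mat n r * Xmat (n + r) r x)
      = transpose_mat (Xmat (n + r) r x) * transpose_mat (Lambda_mat n r)"
    by (rule transpose_mult[OF Lambda_mat_carrier Xmat_carrier])
  then show ?thesis
    by (simp add: Lambda_mat_mult_Xmat[OF assms] transpose_smult_mat)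
qed

lemma shift_recursion_left:
  assumes "r \<ge> 1" and L: "L \<in> carrier_mat (n + r) (n + r)" "invertible_mat L"
    and M: "M \<in> carrier_mat n n"
  shows "(M * Lambda_mat n r * mat_inv L) * (L * Xmat (n + r) r x) = x \<cdot>\<^sub>m (M * Xmat n r x)"
proof -
  note Li = invertible_mat_mat_inv[OF L]
  have MLam: "M * Lambda_mat n r \<in> carrier_mat n (n + r)"
    using M by simp
  have LX: "L * Xmat (n + r) r x \<in> carrier_mat (n + r) r"
    using L by simp
  have "(M * Lambda_mat n r * mat_inv L) * (L * Xmat (n + r) r x)
      = (M * Lambda_mat n r) * (mat_inv L * (L * Xmat (n + r) r x))"
    using MLam Li(1) LX by (rule assoc_mult_mat)
  also have "mat_inv L * (L * Xmat (n + r) r x) = (mat_inv L * L) * Xmat (n + r) r x"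
    using Li(1) L(1) Xmat_carrier by (rule assoc_mult_mat[symmetric])
  also have "(M * Lambda_mat n r) * ((mat_inv L * L) * Xmat (n + r) r x)
      = (M * Lambda_mat n r) * Xmat (n + r) r x"
    by (simp add: Li(2))
  also have "\<dots> = M * (Lambda_mat n r * Xmat (n + r) r x)"
    using M Lambda_mat_carrier Xmat_carrier by (rule assoc_mult_mat)
  also have "\<dots> = x \<cdot>\<^sub>m (M * Xmat n r x)"
    using mult_smult_distrib[OF M Xmat_carrier] by (simp add: Lambda_mat_mult_Xmat[OF assms(1)])
  finally show ?thesis .
qed

lemma shift_recursion_right:
  assumes "r \<ge> 1" and U: "U \<in> carrier_mat (n + r) (n + r)" "invertible_mat U"
    and M: "M \<in> carrier_mat n n"
  shows "(transpose_mat (Xmat (n + r) r x) * U) * (mat_inv U * transpose_mat (Lambda_mat n r) * M)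
    = x \<cdot>\<^sub>m (transpose_mat (Xmat n r x) * M)"
proof -
  note Ui = invertible_mat_mat_inv[OF U]
  define Y where "Y = transpose_mat (Xmat (n + r) r x)"
  define T where "T = transpose_mat (Lambda_mat n r)"
  have Y: "Y \<in> carrier_mat r (n + r)" and T: "T \<in> carrier_mat (n + r) n"
    unfolding Y_def T_def by simp_all
  have TM: "T * M \<in> carrier_mat (n + r) n"
    using T M by simp
  have "(Y * U) * (mat_inv U * T * M) = (Y * U) * (mat_inv U * (T * M))"
    using Ui(1) T M by (simp add: assoc_mult_mat)
  also have "\<dots> = Y * (U * (mat_inv U * (T * M)))"
    using Y U(1) mult_carrier_mat[OF Ui(1) TM] by (rule assoc_mult_mat)
  also have "U * (mat_inv U * (T * M)) = (U * mat_inv U) * (T * M)"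
    using U(1) Ui(1) TM by (rule assoc_mult_mat[symmetric])
  also have "(U * mat_inv U) * (T * M) = T * M"
    using left_mult_one_mat[OF TM] by (simp add: Ui(3))
  also have "Y * (T * M) = (Y * T) * M"
    using Y T M by (rule assoc_mult_mat[symmetric])
  also have "\<dots> = x \<cdot>\<^sub>m (transpose_mat (Xmat n r x) * M)"
    using mult_smult_assoc_mat[OF transpose_carrier_mat[THEN iffD2, OF Xmat_carrier] M]
    unfolding Y_def T_def by (simp add: transpose_Xmat_mult_transpose_Lambda_mat[OF assms(1)])
  finally show ?thesis
    unfolding Y_def T_def .
qed

theorem mainTheorem7:
  fixes p q N :: nat
    and \<mu>p \<mu>n :: "nat \<Rightarrow> nat \<Rightarrow> real measure"
    and L U :: "real mat"
  assumes "p \<ge> 1" and "q \<ge> 1" and "N > max p q"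
    and "\<forall>i<q. \<forall>j<p. real_measure_finite_moments (\<mu>p i j) (\<mu>n i j)"
    and "L \<in> carrier_mat N N" and "U \<in> carrier_mat N N"
    and "invertible_mat L" and "invertible_mat U"
    and "lower_triangular L" and "upper_triangular U"
    and "moment_matrix q p \<mu>p \<mu>n N N = mat_inv L * mat_inv U"
  shows "\<forall>x::real.
      (lead_sub (N - q) L * Lambda_mat (N - q) q * mat_inv L) * (lead_sub N L * Xmat N q x)
        = x \<cdot>\<^sub>m (lead_sub (N - q) L * Xmat (N - q) q x)
    \<and> (transpose_mat (Xmat N p x) * lead_sub N U)
        * (mat_inv U * transpose_mat (Lambda_mat (N - p) p) * lead_sub (N - p) U)
        = x \<cdot>\<^sub>m (transpose_mat (Xmat (N - p) p x) * lead_sub (N - p) U)"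
proof (intro allI conjI)
  fix x :: real
  have Nq: "N - q + q = N" and Np: "N - p + p = N"
    using assms(3) by auto
  show "(lead_sub (N - q) L * Lambda_mat (N - q) q * mat_inv L) * (lead_sub N L * Xmat N q x)
      = x \<cdot>\<^sub>m (lead_sub (N - q) L * Xmat (N - q) q x)"
    using shift_recursion_left[of q L "N - q" "lead_sub (N - q) L" x] assms(2,5,7)
    by (simp add: Nq lead_sub_id)
  show "(transpose_mat (Xmat N p x) * lead_sub N U)
      * (mat_inv U * transpose_mat (Lambda_mat (N - p) p) * lead_sub (N - p) U)
      = x \<cdot>\<^sub>m (transpose_mat (Xmat (N - p) p x) * lead_sub (N - p) U)"
    using shift_recursion_right[of p U "N - p" "lead_sub (N - p) U" x] assms(1,6,8)
    by (simp add: Np lead_sub_id)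
qed

end
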